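(* For the games $\mathcal G$ and $\mathcal G^{\rm sm}$: (a) a B-QGNE of $\mathcal G$ always exists; (b) a QGNE of $\mathcal G^{\rm sm}$ and a restricted B-QGNE of $\mathcal G$ exist provided $\mathcal P\ne\emptyset$; (c) if $\mathbf x^\star$ is a (restricted) B-QGNE of $\mathcal G$ satisfying constraint (C$_q$) for all $q=1,\dots,Q$, then $\mathbf x^\star$ is a QGNE of $\mathcal G^{\rm sm}$; (d) if $\mathbf x^\star$ is a QGNE of $\mathcal G^{\rm sm}$, then $\mathbf x^\star$ is a restricted B-QGNE of $\mathcal G$.
   Context: Fix integers $Q,J\ge1$, noise power $\sigma^2>0$, budgets $P_q>0$ ($q=1,\dots,Q$) and $P^{J}_j>0$ ($j=1,\dots,J$), and positive channel gains $H^{SD}_{qq},H^{SE}_{qe},H^{JD}_{jq},H^{JE}_{je}$. Variables: $p_q\ge0$ and $p^J_{jq}\ge0$; $\mathbf p^J_q=(p^J_{jq})_{j=1}^J$, $\mathbf x_q=(p_q,\mathbf p^J_q)$, $\mathbf x=(\mathbf x_q)_{q=1}^Q$, $\mathbf p^J_{-q}=(\mathbf p^J_r)_{r\ne q}$. Define $r_{qq}(\mathbf x_q)=\log\big(1+\frac{H^{SD}_{qq}p_q}{\sigma^2+\sum_jH^{JD}_{jq}p^J_{jq}}\big)$, $r_{qe}(\mathbf x_q)=\log\big(1+\frac{H^{SE}_{qe}p_q}{\sigma^2+\sum_jH^{JE}_{je}p^J_{jq}}\big)$, $\tilde r^s_q=r_{qq}-r_{qe}$, $r^s_q=\max(0,\tilde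 r^s_q)$. Constraint (C$_q$): $\sum_{j=1}^J(H^{SD}_{qq}H^{JE}_{je}-H^{SE}_{qe}H^{JD}_{jq})p^J_{jq}+(H^{SD}_{qq}-H^{SE}_{qe})\sigma^2\ge0$. $\mathcal P_q(\mathbf p^J_{-q})=\{\mathbf x_q\ge\mathbf 0: p_q\le P_q,\ \sum_{r=1}^Qp^J_{jr}\le P^J_j\ \forall j\}$ (with $p^J_{jr}$, $r\neq q$, fixed by $\mathbf p^J_{-q}$); $\mathcal P^{\rm sm}_q(\mathbf p^J_{-q})=\{\mathbf x_q\in\mathcal P_q(\mathbf p^J_{-q}):\text{(C}_q\text{) holds}\}$; $\mathcal P=\{\mathbf x\ge\mathbf 0: p_q\le P_q \text{ and (C}_q\text{) for all }q,\ \sum_{r}p^J_{jr}\le P^J_j\ \forall j\}$. Game $\mathcal G$: player $q$ maximizes $r^s_q(\mathbf x_q)$ over $\mathcal P_q(\mathbf p^J_{-q})$; game $\mathcal G^{\rm sm}$: player $q$ maximizes $\tilde r^s_q(\mathbf x_q)$ over $\mathcal P^{\rm sm}_q(\mathbf p^J_{-q})$. Let $r^{s\prime}_q(\mathbf x_q;\mathbf d)$ denote the one-sided directional derivative of $r^s_q$ at $\mathbf x_q$ in direction $\mathbf d$. A B-QGNE of $\mathcal G$ is $\mathbf x^\star$ such that for all $q$: $\mathbf x^\star_q\in\mathcal P_q(\mathbf p^{J\star}_{-q})$ and $r^{s\prime}_q(\mathbf x^\star_q;\mathbf x_q-\mathbf x^\star_q)\le0$ for all $\mathbf x_q\in\mathcal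 P_q(\mathbf p^{J\star}_{-q})$. A restricted B-QGNE of $\mathcal G$ is $\mathbf x^\star$ such that for all $q$: $\mathbf x^\star_q\in\mathcal P_q(\mathbf p^{J\star}_{-q})$ and $r^{s\prime}_q(\mathbf x^\star_q;\mathbf x_q-\mathbf x^\star_q)\le0$ for all $\mathbf x_q\in\mathcal P^{\rm sm}_q(\mathbf p^{J\star}_{-q})$. A QGNE of $\mathcal G^{\rm sm}$ is $\mathbf x^\star$ such that for all $q$: $\mathbf x^\star_q\in\mathcal P^{\rm sm}_q(\mathbf p^{J\star}_{-q})$ and $\nabla\tilde r^s_q(\mathbf x^\star_q)^T(\mathbf x_q-\mathbf x^\star_q)\le0$ for all $\mathbf x_q\in\mathcal P^{\rm sm}_q(\mathbf p^{J\star}_{-q})$. *)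

theory Defs
  imports "HOL-Analysis.Analysis"
begin

text \<open>Indices are 0-based: players q < Q, jammers j < J.
  A global profile is a pair (p, pJ) with p q = p_q and pJ j q = p^J_{jq}.
  A local strategy of player q is a pair (pq, pjq) with pjq j = p^J_{jq}.
  The eavesdropper index e is fixed, so H^{SE}_{qe} = HSE q and H^{JE}_{je} = HJE j;
  H^{SD}_{qq} = HSD q and H^{JD}_{jq} = HJD j q.\<close>

record sys =
  nQ :: nat
  nJ :: nat
  sig2 :: real
  Pw :: "nat \<Rightarrow> real"
  PJw :: "nat \<Rightarrow> real"
  HSD :: "nat \<Rightarrow> real"
  HSE :: "nat \<Rightarrow> real"
  HJD :: "nat \<Rightarrow> nat \<Rightarrow> real"
  HJE :: "nat \<Rightarrow> real"

definition r_qq :: "sys \<Rightarrow> nat \<Rightarrow> real \<Rightarrow> (nat \<Rightarrow> real) \<Rightarrow> real" where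
  "r_qq S q pq pjq = ln (1 + HSD S q * pq / (sig2 S + (\<Sum>j<nJ S. HJD S j q * pjq j)))"

definition r_qe :: "sys \<Rightarrow> nat \<Rightarrow> real \<Rightarrow> (nat \<Rightarrow> real) \<Rightarrow> real" where
  "r_qe S q pq pjq = ln (1 + HSE S q * pq / (sig2 S + (\<Sum>j<nJ S. HJE S j * pjq j)))"

definition rs_tilde :: "sys \<Rightarrow> nat \<Rightarrow> real \<Rightarrow> (nat \<Rightarrow> real) \<Rightarrow> real" where
  "rs_tilde S q pq pjq = r_qq S q pq pjq - r_qe S q pq pjq"

definition rs :: "sys \<Rightarrow> nat \<Rightarrow> real \<Rightarrow> (nat \<Rightarrow> real) \<Rightarrow> real" where
  "rs S q pq pjq = max 0 (rs_tilde S q pq pjq)"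

definition Cq :: "sys \<Rightarrow> nat \<Rightarrow> (nat \<Rightarrow> real) \<Rightarrow> bool" where
  "Cq S q pjq \<longleftrightarrow>
     (\<Sum>j<nJ S. (HSD S q * HJE S j - HSE S q * HJD S j q) * pjq j)
       + (HSD S q - HSE S q) * sig2 S \<ge> 0"

text \<open>P_q(p^J_{-q}): the jamming powers of the other players r \<noteq> q are taken from pJ.\<close>
definition Pq :: "sys \<Rightarrow> (nat \<Rightarrow> nat \<Rightarrow> real) \<Rightarrow> nat \<Rightarrow> real \<Rightarrow> (nat \<Rightarrow> real) \<Rightarrow> bool" where
  "Pq S pJ q pq pjq \<longleftrightarrow>
     0 \<le> pq \<and> (\<forall>j<nJ S. 0 \<le> pjq j) \<and> pq \<le> Pw S q \<and>
     (\<forall>j<nJ S. pjq j + (\<Sum>r\<in>{..<nQ S} - {q}. pJ j r) \<le> PJw S j)"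

definition Pq_sm :: "sys \<Rightarrow> (nat \<Rightarrow> nat \<Rightarrow> real) \<Rightarrow> nat \<Rightarrow> real \<Rightarrow> (nat \<Rightarrow> real) \<Rightarrow> bool" where
  "Pq_sm S pJ q pq pjq \<longleftrightarrow> Pq S pJ q pq pjq \<and> Cq S q pjq"

definition Pset :: "sys \<Rightarrow> (nat \<Rightarrow> real) \<Rightarrow> (nat \<Rightarrow> nat \<Rightarrow> real) \<Rightarrow> bool" where
  "Pset S p pJ \<longleftrightarrow>
     (\<forall>q<nQ S. 0 \<le> p q \<and> p q \<le> Pw S q \<and> (\<forall>j<nJ S. 0 \<le> pJ j q) \<and> Cq S q (\<lambda>j. pJ j q)) \<and>
     (\<forall>j<nJ S. (\<Sum>r<nQ S. pJ j r) \<le> PJw S j)"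

definition dir_deriv :: "(real \<Rightarrow> (nat \<Rightarrow> real) \<Rightarrow> real) \<Rightarrow> real \<Rightarrow> (nat \<Rightarrow> real)
    \<Rightarrow> real \<Rightarrow> (nat \<Rightarrow> real) \<Rightarrow> real" where
  "dir_deriv f pq pjq dp dpj =
     Lim (at_right 0) (\<lambda>t. (f (pq + t * dp) (\<lambda>j. pjq j + t * dpj j) - f pq pjq) / t)"

definition grad_dot :: "nat \<Rightarrow> (real \<Rightarrow> (nat \<Rightarrow> real) \<Rightarrow> real) \<Rightarrow> real \<Rightarrow> (nat \<Rightarrow> real)
    \<Rightarrow> real \<Rightarrow> (nat \<Rightarrow> real) \<Rightarrow> real" where
  "grad_dot J f pq pjq dp dpj =
     deriv (\<lambda>s. f s pjq) pq * dp
     + (\<Sum>j<J. deriv (\<lambda>s. f pq (pjq(j := s))) (pjq j) * dpj j)"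

definition BQGNE :: "sys \<Rightarrow> (nat \<Rightarrow> real) \<Rightarrow> (nat \<Rightarrow> nat \<Rightarrow> real) \<Rightarrow> bool" where
  "BQGNE S p pJ \<longleftrightarrow> (\<forall>q<nQ S.
     Pq S pJ q (p q) (\<lambda>j. pJ j q) \<and>
     (\<forall>pq pjq. Pq S pJ q pq pjq \<longrightarrow>
        dir_deriv (rs S q) (p q) (\<lambda>j. pJ j q) (pq - p q) (\<lambda>j. pjq j - pJ j q) \<le> 0))"

definition restricted_BQGNE :: "sys \<Rightarrow> (nat \<Rightarrow> real) \<Rightarrow> (nat \<Rightarrow> nat \<Rightarrow> real) \<Rightarrow> bool" where
  "restricted_BQGNE S p pJ \<longleftrightarrow> (\<forall>q<nQ S.
     Pq S pJ q (p q) (\<lambda>j. pJ j q) \<and>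
     (\<forall>pq pjq. Pq_sm S pJ q pq pjq \<longrightarrow>
        dir_deriv (rs S q) (p q) (\<lambda>j. pJ j q) (pq - p q) (\<lambda>j. pjq j - pJ j q) \<le> 0))"

definition QGNE_sm :: "sys \<Rightarrow> (nat \<Rightarrow> real) \<Rightarrow> (nat \<Rightarrow> nat \<Rightarrow> real) \<Rightarrow> bool" where
  "QGNE_sm S p pJ \<longleftrightarrow> (\<forall>q<nQ S.
     Pq_sm S pJ q (p q) (\<lambda>j. pJ j q) \<and>
     (\<forall>pq pjq. Pq_sm S pJ q pq pjq \<longrightarrow>
        grad_dot (nJ S) (rs_tilde S q) (p q) (\<lambda>j. pJ j q) (pq - p q) (\<lambda>j. pjq j - pJ j q) \<le> 0))"

definition valid_sys :: "sys \<Rightarrow> bool" where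
  "valid_sys S \<longleftrightarrow> nQ S \<ge> 1 \<and> nJ S \<ge> 1 \<and> sig2 S > 0 \<and>
     (\<forall>q<nQ S. Pw S q > 0 \<and> HSD S q > 0 \<and> HSE S q > 0) \<and>
     (\<forall>j<nJ S. PJw S j > 0 \<and> HJE S j > 0 \<and> (\<forall>q<nQ S. HJD S j q > 0))"

end

theory Submission
  imports Defs
begin

text \<open>Each secrecy rate depends only on the player's own strategy, and the players interact only
  through the shared jamming budgets. Hence the sum of the utilities is an exact potential: it
  attains its maximum on the compact joint feasible set, and at a maximiser no player can improve
  by moving along a segment inside its own convex feasible set, so every one-sided directional
  derivative of its utility there is nonpositive. Maximising the sum of the rates rs gives a
  B-QGNE of the game with utilities rs; maximising the sum of the rates rs_tilde over the joint set
  Pset gives a QGNE of the smooth game, which is a restricted B-QGNE.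
  For the comparison of the equilibrium notions: rs = max 0 rs_tilde with rs_tilde smooth, so the
  directional derivative of rs is the gradient term where rs_tilde > 0, zero where rs_tilde < 0,
  and the positive part of the gradient term where rs_tilde = 0; and constraint Cq forces
  rs_tilde \<ge> 0.\<close>

section \<open>Derivatives of the link rates\<close>

lemma DERIV_ln_one_plus_quotient:
  fixes X Y :: "real \<Rightarrow> real"
  assumes X: "(X has_real_derivative X') (at t)" and Y: "(Y has_real_derivative Y') (at t)"
    and Y_pos: "0 < Y t" and X_nonneg: "0 \<le> X t"
  shows "((\<lambda>s. ln (1 + X s / Y s)) has_real_derivative
           X' / (Y t + X t) - X t * Y' / (Y t * (Y t + X t))) (at t)"
proof -
  have N_pos: "0 < Y t + X t" using Y_pos X_nonneg by simp
  have "((\<lambda>s. 1 + X s / Y s) has_real_derivative (X' * Y t - X t * Y') / (Y t * Y t)) (at t)"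
    by (rule derivative_eq_intros X Y refl | use Y_pos in simp)+
  moreover have "0 < 1 + X t / Y t" using Y_pos X_nonneg by (simp add: add_pos_nonneg)
  ultimately have "((\<lambda>s. ln (1 + X s / Y s)) has_real_derivative
      inverse (1 + X t / Y t) * ((X' * Y t - X t * Y') / (Y t * Y t))) (at t)"
    by (metis DERIV_chain2 DERIV_ln)
  moreover have "inverse (1 + X t / Y t) * ((X' * Y t - X t * Y') / (Y t * Y t))
      = X' / (Y t + X t) - X t * Y' / (Y t * (Y t + X t))"
    using Y_pos N_pos by (simp add: divide_simps)
  ultimately show ?thesis by simp
qed

definition snr_rate :: "real \<Rightarrow> real \<Rightarrow> (nat \<Rightarrow> real) \<Rightarrow> nat \<Rightarrow> real \<Rightarrow> (nat \<Rightarrow> real) \<Rightarrow> real" where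
  "snr_rate h \<sigma> g J p u = ln (1 + h * p / (\<sigma> + (\<Sum>j<J. g j * u j)))"

context
  fixes h \<sigma> :: real and g u :: "nat \<Rightarrow> real" and J :: nat and p :: real
  assumes I_pos: "0 < \<sigma> + (\<Sum>j<J. g j * u j)" and hp_nonneg: "0 \<le> h * p"
begin

lemma snr_rate_partial_power:
  "((\<lambda>s. snr_rate h \<sigma> g J s u) has_real_derivative
     h / (\<sigma> + (\<Sum>j<J. g j * u j) + h * p)) (at p)"
  unfolding snr_rate_def
  using DERIV_ln_one_plus_quotient[of "\<lambda>s. h * s" h p "\<lambda>_. \<sigma> + (\<Sum>j<J. g j * u j)" 0]
    I_pos hp_nonneg by (auto intro!: derivative_eq_intros)

lemma snr_rate_partial_jammer:
  assumes "j < J"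
  shows "((\<lambda>s. snr_rate h \<sigma> g J p (u(j := s))) has_real_derivative
     - (g j * (h * p / ((\<sigma> + (\<Sum>j<J. g j * u j)) * (\<sigma> + (\<Sum>j<J. g j * u j) + h * p))))) (at (u j))"
proof -
  have "((\<lambda>s. \<Sum>i<J. g i * (u(j := s)) i) has_real_derivative (\<Sum>i<J. if i = j then g j else 0))
      (at (u j))"
    by (rule DERIV_sum, cases "i = j") (auto intro!: derivative_eq_intros)
  then have "((\<lambda>s. \<sigma> + (\<Sum>i<J. g i * (u(j := s)) i)) has_real_derivative g j) (at (u j))"
    using DERIV_add[OF DERIV_const] assms by fastforce
  from DERIV_ln_one_plus_quotient[OF DERIV_const[of "h * p"] this] I_pos hp_nonneg
  show ?thesis unfolding snr_rate_def by (simp add: mult_ac)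
qed

lemma snr_rate_line:
  "((\<lambda>t. snr_rate h \<sigma> g J (p + t * dp) (\<lambda>j. u j + t * du j)) has_real_derivative
     h * dp / (\<sigma> + (\<Sum>j<J. g j * u j) + h * p)
     - h * p * (\<Sum>j<J. g j * du j) / ((\<sigma> + (\<Sum>j<J. g j * u j)) * (\<sigma> + (\<Sum>j<J. g j * u j) + h * p))) (at 0)"
proof -
  have "((\<lambda>t. \<sigma> + (\<Sum>j<J. g j * (u j + t * du j))) has_real_derivative (\<Sum>j<J. g j * du j)) (at 0)"
    by (auto intro!: derivative_eq_intros simp: mult.commute)
  moreover have "((\<lambda>t. h * (p + t * dp)) has_real_derivative h * dp) (at 0)"
    by (auto intro!: derivative_eq_intros)
  ultimately show ?thesis
    using DERIV_ln_one_plus_quotient I_pos hp_nonneg unfolding snr_rate_def by fastforce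
qed

lemma snr_rate_grad_dot:
  "grad_dot J (snr_rate h \<sigma> g J) p u dp du =
     h * dp / (\<sigma> + (\<Sum>j<J. g j * u j) + h * p)
     - h * p * (\<Sum>j<J. g j * du j) / ((\<sigma> + (\<Sum>j<J. g j * u j)) * (\<sigma> + (\<Sum>j<J. g j * u j) + h * p))"
proof -
  define K where "K = h * p / ((\<sigma> + (\<Sum>j<J. g j * u j)) * (\<sigma> + (\<Sum>j<J. g j * u j) + h * p))"
  have "(\<Sum>j<J. deriv (\<lambda>s. snr_rate h \<sigma> g J p (u(j := s))) (u j) * du j) = (\<Sum>j<J. - K * (g j * du j))"
    using DERIV_imp_deriv[OF snr_rate_partial_jammer] by (intro sum.cong) (auto simp: K_def[symmetric])
  also have "\<dots> = - K * (\<Sum>j<J. g j * du j)" by (simp add: sum_distrib_left)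
  finally show ?thesis
    unfolding grad_dot_def DERIV_imp_deriv[OF snr_rate_partial_power]
    by (simp add: K_def)
qed

lemma snr_rate_line_grad_dot:
  "((\<lambda>t. snr_rate h \<sigma> g J (p + t * dp) (\<lambda>j. u j + t * du j)) has_real_derivative
     grad_dot J (snr_rate h \<sigma> g J) p u dp du) (at 0)"
  unfolding snr_rate_grad_dot by (rule snr_rate_line)

lemma snr_rate_partials_differentiable:
  "(\<lambda>s. snr_rate h \<sigma> g J s u) field_differentiable at p"
  "j < J \<Longrightarrow> (\<lambda>s. snr_rate h \<sigma> g J p (u(j := s))) field_differentiable at (u j)"
  using snr_rate_partial_power snr_rate_partial_jammer unfolding field_differentiable_def by blast+

end

lemma grad_dot_diff:
  assumes "(\<lambda>s. f s u) field_differentiable at p" "(\<lambda>s. g s u) field_differentiable at p"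
    and "\<And>j. j < J \<Longrightarrow> (\<lambda>s. f p (u(j := s))) field_differentiable at (u j)"
    and "\<And>j. j < J \<Longrightarrow> (\<lambda>s. g p (u(j := s))) field_differentiable at (u j)"
  shows "grad_dot J (\<lambda>a b. f a b - g a b) p u dp du = grad_dot J f p u dp du - grad_dot J g p u dp du"
proof -
  have "(\<Sum>j<J. deriv (\<lambda>s. f p (u(j := s)) - g p (u(j := s))) (u j) * du j)
      = (\<Sum>j<J. deriv (\<lambda>s. f p (u(j := s))) (u j) * du j) - (\<Sum>j<J. deriv (\<lambda>s. g p (u(j := s))) (u j) * du j)"
    using assms(3,4) by (simp add: sum_subtractf[symmetric] left_diff_distrib)
  then show ?thesis using assms(1,2) unfolding grad_dot_def by (simp add: left_diff_distrib)
qed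

lemma interference_pos:
  assumes "0 < \<sigma>" and "\<And>j. j < J \<Longrightarrow> 0 \<le> g j" and "\<And>j. j < J \<Longrightarrow> 0 \<le> u j"
  shows "0 < \<sigma> + (\<Sum>j<J. g j * u j :: real)"
  using assms by (intro add_pos_nonneg sum_nonneg mult_nonneg_nonneg) auto

lemma rs_tilde_snr_rate:
  "rs_tilde S q = (\<lambda>a b. snr_rate (HSD S q) (sig2 S) (\<lambda>j. HJD S j q) (nJ S) a b
                          - snr_rate (HSE S q) (sig2 S) (HJE S) (nJ S) a b)"
  by (simp add: fun_eq_iff rs_tilde_def r_qq_def r_qe_def snr_rate_def)

section \<open>One-sided derivatives of the secrecy rates\<close>

lemma max_zero_right_difference_quotient:
  fixes g :: "real \<Rightarrow> real"
  assumes "(g has_real_derivative D) (at 0)"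
  shows "((\<lambda>t. (max 0 (g t) - max 0 (g 0)) / t) \<longlongrightarrow>
     (if 0 < g 0 then D else if g 0 < 0 then 0 else max 0 D)) (at_right 0)"
proof -
  have "(g has_real_derivative D) (at_right 0)"
    using assms by (rule has_field_derivative_at_within)
  then have quot: "((\<lambda>t. (g t - g 0) / t) \<longlongrightarrow> D) (at_right 0)"
    by (simp add: has_field_derivative_iff)
  have "(g \<longlongrightarrow> g 0) (at_right 0)"
    using DERIV_isCont[OF assms] by (simp add: isCont_def filterlim_at_split)
  then consider "0 < g 0" "\<forall>\<^sub>F t in at_right 0. 0 < g t" | "g 0 < 0" "\<forall>\<^sub>F t in at_right 0. g t < 0"
    | "g 0 = 0"
    using order_tendstoD by (metis linorder_neqE_linordered_idom)
  then show ?thesis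
  proof cases
    case 1
    then have "\<forall>\<^sub>F t in at_right 0. (g t - g 0) / t = (max 0 (g t) - max 0 (g 0)) / t"
      by (auto elim: eventually_mono)
    with quot 1 show ?thesis by (simp add: tendsto_cong)
  next
    case 2
    then have "\<forall>\<^sub>F t in at_right 0. 0 = (max 0 (g t) - max 0 (g 0)) / t"
      by (auto elim: eventually_mono)
    then have "((\<lambda>t. (max 0 (g t) - max 0 (g 0)) / t) \<longlongrightarrow> 0) (at_right 0)"
      by (rule tendsto_cong[THEN iffD1, OF _ tendsto_const])
    with 2 show ?thesis by simp
  next
    case 3
    have "\<forall>\<^sub>F t in at_right 0. max 0 ((g t - g 0) / t) = (max 0 (g t) - max 0 (g 0)) / t"
      using eventually_at_right_less[of 0]
      by eventually_elim (use 3 in \<open>auto simp: max_def divide_le_0_iff zero_le_divide_iff\<close>)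
    moreover have "((\<lambda>t. max 0 ((g t - g 0) / t)) \<longlongrightarrow> max 0 D) (at_right 0)"
      by (intro tendsto_max tendsto_const quot)
    ultimately show ?thesis using 3 by (simp add: tendsto_cong)
  qed
qed

lemma right_difference_quotient_limit_nonpos:
  fixes \<phi> :: "real \<Rightarrow> real"
  assumes "((\<lambda>t. (\<phi> t - \<phi> 0) / t) \<longlongrightarrow> L) (at_right 0)"
    and "\<And>t. 0 < t \<Longrightarrow> t \<le> 1 \<Longrightarrow> \<phi> t \<le> \<phi> 0"
  shows "L \<le> 0"
proof (rule tendsto_upperbound[OF assms(1)])
  show "\<forall>\<^sub>F t in at_right 0. (\<phi> t - \<phi> 0) / t \<le> 0"
    unfolding eventually_at_right_field
    using assms(2) by (intro exI[of _ 1]) (auto simp: divide_nonpos_pos)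
qed simp

context
  fixes S :: sys and q :: nat and pq :: real and pjq :: "nat \<Rightarrow> real"
  assumes valid: "valid_sys S" and q: "q < nQ S"
    and pq_nonneg: "0 \<le> pq" and pjq_nonneg: "\<forall>j<nJ S. 0 \<le> pjq j"
begin

lemma legitimate_interference_pos: "0 < sig2 S + (\<Sum>j<nJ S. HJD S j q * pjq j)"
  using valid q pjq_nonneg by (intro interference_pos) (auto simp: valid_sys_def less_imp_le)

lemma eavesdropper_interference_pos: "0 < sig2 S + (\<Sum>j<nJ S. HJE S j * pjq j)"
  using valid pjq_nonneg by (intro interference_pos) (auto simp: valid_sys_def less_imp_le)

lemma signal_powers_nonneg: "0 \<le> HSD S q * pq" "0 \<le> HSE S q * pq"
  using valid q pq_nonneg by (auto simp: valid_sys_def less_imp_le)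

lemma rs_tilde_line_grad_dot:
  "((\<lambda>t. rs_tilde S q (pq + t * dp) (\<lambda>j. pjq j + t * dpj j)) has_real_derivative
     grad_dot (nJ S) (rs_tilde S q) pq pjq dp dpj) (at 0)"
  unfolding rs_tilde_snr_rate
  using legitimate_interference_pos eavesdropper_interference_pos signal_powers_nonneg
  by (simp add: grad_dot_diff snr_rate_partials_differentiable
      DERIV_diff[OF snr_rate_line_grad_dot snr_rate_line_grad_dot])

lemma rs_tilde_difference_quotient_tendsto:
  "((\<lambda>t. (rs_tilde S q (pq + t * dp) (\<lambda>j. pjq j + t * dpj j) - rs_tilde S q pq pjq) / t)
     \<longlongrightarrow> grad_dot (nJ S) (rs_tilde S q) pq pjq dp dpj) (at_right 0)"
  using has_field_derivative_at_within[OF rs_tilde_line_grad_dot]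
  by (simp add: has_field_derivative_iff)

lemma dir_deriv_rs:
  "dir_deriv (rs S q) pq pjq dp dpj =
     (let G = grad_dot (nJ S) (rs_tilde S q) pq pjq dp dpj in
        if 0 < rs_tilde S q pq pjq then G else if rs_tilde S q pq pjq < 0 then 0 else max 0 G)"
  unfolding dir_deriv_def Let_def
  using max_zero_right_difference_quotient[OF rs_tilde_line_grad_dot[of dp dpj]]
  by (intro tendsto_Lim)
    (simp_all only: rs_def mult_zero_left add_0_right trivial_limit_at_right_real not_False_eq_True)

lemma rs_difference_quotient_tendsto:
  "((\<lambda>t. (rs S q (pq + t * dp) (\<lambda>j. pjq j + t * dpj j) - rs S q pq pjq) / t)
     \<longlongrightarrow> dir_deriv (rs S q) pq pjq dp dpj) (at_right 0)"
  unfolding dir_deriv_rs Let_def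
  using max_zero_right_difference_quotient[OF rs_tilde_line_grad_dot[of dp dpj]]
  unfolding rs_def by (simp only: mult_zero_left add_0_right)

lemma rs_tilde_nonneg_if_Cq:
  assumes "Cq S q pjq"
  shows "0 \<le> rs_tilde S q pq pjq"
proof -
  define I_D where "I_D = sig2 S + (\<Sum>j<nJ S. HJD S j q * pjq j)"
  define I_E where "I_E = sig2 S + (\<Sum>j<nJ S. HJE S j * pjq j)"
  have "(\<Sum>j<nJ S. (HSD S q * HJE S j - HSE S q * HJD S j q) * pjq j) + (HSD S q - HSE S q) * sig2 S
      = HSD S q * I_E - HSE S q * I_D"
    by (simp add: I_D_def I_E_def algebra_simps sum_subtractf sum_distrib_left)
  then have "HSE S q * I_D \<le> HSD S q * I_E" using assms unfolding Cq_def by simp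
  then have "HSE S q * pq * I_D \<le> HSD S q * pq * I_E"
    using pq_nonneg mult_right_mono by (fastforce simp: mult_ac)
  then have "HSE S q * pq / I_E \<le> HSD S q * pq / I_D"
    using legitimate_interference_pos eavesdropper_interference_pos
    by (simp add: I_D_def I_E_def divide_simps)
  moreover have "0 < 1 + HSE S q * pq / I_E"
    using eavesdropper_interference_pos signal_powers_nonneg by (simp add: I_E_def add_pos_nonneg)
  ultimately show ?thesis
    unfolding rs_tilde_def r_qq_def r_qe_def I_D_def I_E_def by (simp add: ln_mono)
qed

end

section \<open>Comparison of the equilibrium notions\<close>

lemma Pq_nonneg:
  assumes "Pq S pJ q pq pjq"
  shows "0 \<le> pq" "\<forall>j<nJ S. 0 \<le> pjq j"
  using assms by (auto simp: Pq_def)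

lemma BQGNE_imp_restricted_BQGNE: "BQGNE S p pJ \<Longrightarrow> restricted_BQGNE S p pJ"
  unfolding BQGNE_def restricted_BQGNE_def Pq_sm_def by blast

lemma QGNE_sm_imp_restricted_BQGNE:
  assumes valid: "valid_sys S" and "QGNE_sm S p pJ"
  shows "restricted_BQGNE S p pJ"
  unfolding restricted_BQGNE_def
proof (intro allI impI conjI)
  fix q assume q: "q < nQ S"
  then have own: "Pq S pJ q (p q) (\<lambda>j. pJ j q)"
    and grad: "\<And>pq pjq. Pq_sm S pJ q pq pjq \<Longrightarrow>
        grad_dot (nJ S) (rs_tilde S q) (p q) (\<lambda>j. pJ j q) (pq - p q) (\<lambda>j. pjq j - pJ j q) \<le> 0"
    using assms(2) by (auto simp: QGNE_sm_def Pq_sm_def)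
  show "Pq S pJ q (p q) (\<lambda>j. pJ j q)" by (fact own)
  fix pq pjq assume "Pq_sm S pJ q pq pjq"
  then show "dir_deriv (rs S q) (p q) (\<lambda>j. pJ j q) (pq - p q) (\<lambda>j. pjq j - pJ j q) \<le> 0"
    using grad dir_deriv_rs[OF valid q Pq_nonneg[OF own]] by (simp add: Let_def)
qed

lemma restricted_BQGNE_imp_QGNE_sm:
  assumes valid: "valid_sys S" and "restricted_BQGNE S p pJ"
    and C: "\<forall>q<nQ S. Cq S q (\<lambda>j. pJ j q)"
  shows "QGNE_sm S p pJ"
  unfolding QGNE_sm_def
proof (intro allI impI conjI)
  fix q assume q: "q < nQ S"
  then have own: "Pq S pJ q (p q) (\<lambda>j. pJ j q)"
    and dir: "\<And>pq pjq. Pq_sm S pJ q pq pjq \<Longrightarrow>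
        dir_deriv (rs S q) (p q) (\<lambda>j. pJ j q) (pq - p q) (\<lambda>j. pjq j - pJ j q) \<le> 0"
    using assms(2) by (auto simp: restricted_BQGNE_def)
  show "Pq_sm S pJ q (p q) (\<lambda>j. pJ j q)" using own C q by (simp add: Pq_sm_def)
  have "0 \<le> rs_tilde S q (p q) (\<lambda>j. pJ j q)"
    using rs_tilde_nonneg_if_Cq[OF valid q Pq_nonneg[OF own]] C q by simp
  moreover fix pq pjq assume "Pq_sm S pJ q pq pjq"
  ultimately show "grad_dot (nJ S) (rs_tilde S q) (p q) (\<lambda>j. pJ j q) (pq - p q) (\<lambda>j. pjq j - pJ j q) \<le> 0"
    using dir[of pq pjq] dir_deriv_rs[OF valid q Pq_nonneg[OF own]]
    by (auto simp: Let_def split: if_splits)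
qed

section \<open>Existence of equilibria via a potential\<close>

type_synonym profile = "(nat \<Rightarrow> real) \<times> (nat \<Rightarrow> nat \<Rightarrow> real)"

text \<open>Coordinates outside the index ranges are pinned to 0, which makes the set of profiles
  compact in the product topology.\<close>
definition profiles :: "sys \<Rightarrow> (nat \<Rightarrow> (nat \<Rightarrow> real) \<Rightarrow> bool) \<Rightarrow> profile set" where
  "profiles S C =
     ((\<Pi>\<^sub>E q\<in>UNIV. if q < nQ S then {0..Pw S q} else {0})
        \<times> (\<Pi>\<^sub>E j\<in>UNIV. \<Pi>\<^sub>E q\<in>UNIV. if j < nJ S \<and> q < nQ S then {0..PJw S j} else {0}))
     \<inter> {x. \<forall>j<nJ S. (\<Sum>r<nQ S. snd x j r) \<le> PJw S j}
     \<inter> {x. \<forall>q<nQ S. C q (\<lambda>j. snd x j q)}"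

lemma profiles_iff:
  "x \<in> profiles S C \<longleftrightarrow>
     (\<forall>q. fst x q \<in> (if q < nQ S then {0..Pw S q} else {0})) \<and>
     (\<forall>j q. snd x j q \<in> (if j < nJ S \<and> q < nQ S then {0..PJw S j} else {0})) \<and>
     (\<forall>j<nJ S. (\<Sum>r<nQ S. snd x j r) \<le> PJw S j) \<and>
     (\<forall>q<nQ S. C q (\<lambda>j. snd x j q))"
  unfolding profiles_def PiE_UNIV_domain by (simp add: Pi_iff mem_Times_iff)

lemma compact_PiE_UNIV:
  fixes A :: "'i \<Rightarrow> 'b::topological_space set"
  assumes "\<And>i. compact (A i)"
  shows "compact (PiE UNIV A)"
proof -
  have "compactin (product_topology (\<lambda>_. euclidean) UNIV) (PiE UNIV A)"
    using assms by (simp add: compactin_PiE compactin_euclidean_iff)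
  then show ?thesis by (simp add: euclidean_product_topology compactin_euclidean_iff)
qed

lemma continuous_on_profile_power [continuous_intros]:
  "continuous_on A (\<lambda>x::profile. fst x q)"
  by (rule continuous_on_product_then_coordinatewise, rule continuous_on_fst, rule continuous_on_id)

lemma continuous_on_profile_jamming [continuous_intros]:
  "continuous_on A (\<lambda>x::profile. snd x j q)"
  by (rule continuous_on_product_then_coordinatewise, rule continuous_on_product_then_coordinatewise,
      rule continuous_on_snd, rule continuous_on_id)

lemma continuous_on_profile_jammers:
  "continuous_on A (\<lambda>x::profile. \<lambda>j. snd x j q)"
  by (rule continuous_on_coordinatewise_then_product, rule continuous_on_profile_jamming)

lemma compact_profiles:
  assumes closed_C: "\<And>q. closed (Collect (C q))"
  shows "compact (profiles S C)"
  unfolding profiles_def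
proof (intro compact_Int_closed)
  show "compact ((\<Pi>\<^sub>E q\<in>UNIV. if q < nQ S then {0..Pw S q} else {0})
        \<times> (\<Pi>\<^sub>E j\<in>UNIV. \<Pi>\<^sub>E q\<in>UNIV. if j < nJ S \<and> q < nQ S then {0..PJw S j} else {0}))"
    by (intro compact_Times compact_PiE_UNIV) auto
  have "{x::profile. \<forall>j<nJ S. (\<Sum>r<nQ S. snd x j r) \<le> PJw S j}
      = (\<Inter>j<nJ S. {x. (\<Sum>r<nQ S. snd x j r) \<le> PJw S j})" by auto
  then show "closed {x::profile. \<forall>j<nJ S. (\<Sum>r<nQ S. snd x j r) \<le> PJw S j}"
    by (simp add: closed_INT closed_Collect_le continuous_intros)
  have "{x::profile. \<forall>q<nQ S. C q (\<lambda>j. snd x j q)}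
      = (\<Inter>q<nQ S. (\<lambda>x. \<lambda>j. snd x j q) -` Collect (C q))" by auto
  moreover have "closed ((\<lambda>x::profile. \<lambda>j. snd x j q) -` Collect (C q))" for q
    by (rule closed_vimage[OF closed_C continuous_on_profile_jammers])
  ultimately show "closed {x::profile. \<forall>q<nQ S. C q (\<lambda>j. snd x j q)}"
    by (simp add: closed_INT)
qed

lemma profile_jamming_nonneg:
  assumes "x \<in> profiles S C" and "j < nJ S" and "r < nQ S"
  shows "0 \<le> snd x j r"
  using assms unfolding profiles_iff by (metis atLeastAtMost_iff)

lemma profile_own_Pq:
  assumes "x \<in> profiles S C" and "q < nQ S"
  shows "Pq S (snd x) q (fst x q) (\<lambda>j. snd x j q)"
proof -
  have "(\<Sum>r<nQ S. snd x j r) = snd x j q + (\<Sum>r\<in>{..<nQ S} - {q}. snd x j r)" for j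
    using assms(2) by (simp add: sum.remove)
  then show ?thesis
    using assms unfolding profiles_iff Pq_def by (metis atLeastAtMost_iff)
qed

lemma profile_constraint: "x \<in> profiles S C \<Longrightarrow> q < nQ S \<Longrightarrow> C q (\<lambda>j. snd x j q)"
  by (simp add: profiles_iff)

definition truncate_jammers :: "sys \<Rightarrow> (nat \<Rightarrow> real) \<Rightarrow> nat \<Rightarrow> real" where
  "truncate_jammers S v j = (if j < nJ S then v j else 0)"

lemma rs_tilde_truncate_jammers: "rs_tilde S q a (truncate_jammers S v) = rs_tilde S q a v"
  by (simp add: rs_tilde_def r_qq_def r_qe_def truncate_jammers_def)

lemma rs_truncate_jammers: "rs S q a (truncate_jammers S v) = rs S q a v"
  by (simp add: rs_def rs_tilde_truncate_jammers)

lemma Cq_truncate_jammers: "Cq S q (truncate_jammers S v) = Cq S q v"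
  by (simp add: Cq_def truncate_jammers_def)

definition deviate :: "sys \<Rightarrow> profile \<Rightarrow> nat \<Rightarrow> real \<Rightarrow> (nat \<Rightarrow> real) \<Rightarrow> profile" where
  "deviate S x q a v = ((fst x)(q := a), \<lambda>j r. if r = q then truncate_jammers S v j else snd x j r)"

lemma deviate_in_profiles:
  assumes x: "x \<in> profiles S C" and q: "q < nQ S"
    and dev: "Pq S (snd x) q a v" "C q (truncate_jammers S v)"
  shows "deviate S x q a v \<in> profiles S C"
  unfolding profiles_iff
proof (intro conjI allI impI)
  have others_nonneg: "0 \<le> (\<Sum>r\<in>{..<nQ S} - {q}. snd x j r)" if "j < nJ S" for j
    using x that by (intro sum_nonneg profile_jamming_nonneg) auto
  have budget: "(\<Sum>r<nQ S. snd (deviate S x q a v) j r)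
      = truncate_jammers S v j + (\<Sum>r\<in>{..<nQ S} - {q}. snd x j r)" for j
    using q by (simp add: sum.remove deviate_def)
  fix j r
  have "fst x r \<in> (if r < nQ S then {0..Pw S r} else {0})" using x by (simp add: profiles_iff)
  then show "fst (deviate S x q a v) r \<in> (if r < nQ S then {0..Pw S r} else {0})"
    using q dev(1) by (auto simp: deviate_def Pq_def)
  have "snd x j r \<in> (if j < nJ S \<and> r < nQ S then {0..PJw S j} else {0})"
    using x by (simp add: profiles_iff)
  then show "snd (deviate S x q a v) j r \<in> (if j < nJ S \<and> r < nQ S then {0..PJw S j} else {0})"
    using q dev(1) others_nonneg[of j]
    by (fastforce simp: deviate_def Pq_def truncate_jammers_def)
  show "(\<Sum>r<nQ S. snd (deviate S x q a v) j r) \<le> PJw S j" if "j < nJ S"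
    using dev(1) that unfolding budget by (simp add: Pq_def truncate_jammers_def)
  show "C r (\<lambda>j. snd (deviate S x q a v) j r)" if "r < nQ S"
    using x that dev(2) by (cases "r = q") (simp_all add: deviate_def profiles_iff)
qed

definition potential :: "(nat \<Rightarrow> real \<Rightarrow> (nat \<Rightarrow> real) \<Rightarrow> real) \<Rightarrow> sys \<Rightarrow> profile \<Rightarrow> real" where
  "potential f S x = (\<Sum>q<nQ S. f q (fst x q) (\<lambda>j. snd x j q))"

lemma potential_deviate:
  assumes "q < nQ S"
  shows "potential f S (deviate S x q a v)
    = potential f S x - f q (fst x q) (\<lambda>j. snd x j q) + f q a (truncate_jammers S v)"
proof -
  have "(\<Sum>r\<in>{..<nQ S} - {q}. f r (fst (deviate S x q a v) r) (\<lambda>j. snd (deviate S x q a v) j r))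
      = (\<Sum>r\<in>{..<nQ S} - {q}. f r (fst x r) (\<lambda>j. snd x j r))"
    by (intro sum.cong) (auto simp: deviate_def)
  then show ?thesis
    using assms unfolding potential_def by (simp add: sum.remove deviate_def)
qed

lemma potential_maximizer_best_response:
  assumes x: "x \<in> profiles S C" and max: "\<forall>y\<in>profiles S C. potential f S y \<le> potential f S x"
    and q: "q < nQ S" and dev: "Pq S (snd x) q a v" "C q (truncate_jammers S v)"
  shows "f q a (truncate_jammers S v) \<le> f q (fst x q) (\<lambda>j. snd x j q)"
  using max deviate_in_profiles[OF x q dev] potential_deviate[OF q, of f x a v] by auto

lemma segment_le:
  fixes x y c t :: real
  assumes "x \<le> c" "y \<le> c" "0 \<le> t" "t \<le> 1"
  shows "x + t * (y - x) \<le> c"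
proof -
  have "x + t * (y - x) = (1 - t) * x + t * y" by (simp add: algebra_simps)
  also have "\<dots> \<le> (1 - t) * c + t * c" using assms by (intro add_mono mult_left_mono) auto
  finally show ?thesis by (simp add: algebra_simps)
qed

lemma segment_ge:
  fixes x y c t :: real
  assumes "c \<le> x" "c \<le> y" "0 \<le> t" "t \<le> 1"
  shows "c \<le> x + t * (y - x)"
  using segment_le[of "-x" "-c" "-y" t] assms by (simp add: algebra_simps)

lemma Pq_segment:
  assumes "Pq S pJ q a1 v1" "Pq S pJ q a2 v2" "0 \<le> t" "t \<le> 1"
  shows "Pq S pJ q (a1 + t * (a2 - a1)) (\<lambda>j. v1 j + t * (v2 j - v1 j))"
proof -
  have "v1 j + t * (v2 j - v1 j) + R \<le> c" if "v1 j + R \<le> c" "v2 j + R \<le> c" for j R c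
    using segment_le[OF that assms(3,4)] by (simp add: algebra_simps)
  then show ?thesis
    using assms unfolding Pq_def by (auto intro!: segment_le segment_ge)
qed

lemma Cq_segment:
  assumes "Cq S q v1" "Cq S q v2" "0 \<le> t" "t \<le> 1"
  shows "Cq S q (\<lambda>j. v1 j + t * (v2 j - v1 j))"
proof -
  define L where "L v = (\<Sum>j<nJ S. (HSD S q * HJE S j - HSE S q * HJD S j q) * v j)
      + (HSD S q - HSE S q) * sig2 S" for v
  have "L (\<lambda>j. v1 j + t * (v2 j - v1 j)) = L v1 + t * (L v2 - L v1)"
    by (simp add: L_def algebra_simps sum.distrib sum_subtractf sum_distrib_left)
  moreover have "0 \<le> L v1 + t * (L v2 - L v1)"
    using assms by (intro segment_ge) (auto simp: L_def Cq_def)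
  ultimately show ?thesis by (simp add: L_def Cq_def)
qed

lemma potential_maximizer_right_derivative_nonpos:
  assumes x: "x \<in> profiles S C" and max: "\<forall>y\<in>profiles S C. potential f S y \<le> potential f S x"
    and q: "q < nQ S" and dev: "Pq S (snd x) q pq pjq"
    and C_segment: "\<And>t. 0 \<le> t \<Longrightarrow> t \<le> 1 \<Longrightarrow> C q (\<lambda>j. snd x j q + t * (pjq j - snd x j q))"
    and C_truncate: "\<And>v. C q (truncate_jammers S v) = C q v"
    and f_truncate: "\<And>a v. f q a (truncate_jammers S v) = f q a v"
    and lim: "((\<lambda>t. (f q (fst x q + t * (pq - fst x q)) (\<lambda>j. snd x j q + t * (pjq j - snd x j q))
                  - f q (fst x q) (\<lambda>j. snd x j q)) / t) \<longlongrightarrow> L) (at_right 0)"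
  shows "L \<le> 0"
proof (rule right_difference_quotient_limit_nonpos[where \<phi> =
    "\<lambda>t. f q (fst x q + t * (pq - fst x q)) (\<lambda>j. snd x j q + t * (pjq j - snd x j q))"])
  show "((\<lambda>t. (f q (fst x q + t * (pq - fst x q)) (\<lambda>j. snd x j q + t * (pjq j - snd x j q))
      - f q (fst x q + 0 * (pq - fst x q)) (\<lambda>j. snd x j q + 0 * (pjq j - snd x j q))) / t) \<longlongrightarrow> L) (at_right 0)"
    using lim by simp
  fix t :: real assume "0 < t" "t \<le> 1"
  then have "Pq S (snd x) q (fst x q + t * (pq - fst x q)) (\<lambda>j. snd x j q + t * (pjq j - snd x j q))"
    and "C q (truncate_jammers S (\<lambda>j. snd x j q + t * (pjq j - snd x j q)))"
    using Pq_segment[OF profile_own_Pq[OF x q] dev] C_segment C_truncate by auto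
  from potential_maximizer_best_response[OF x max q this]
  show "f q (fst x q + t * (pq - fst x q)) (\<lambda>j. snd x j q + t * (pjq j - snd x j q))
      \<le> f q (fst x q + 0 * (pq - fst x q)) (\<lambda>j. snd x j q + 0 * (pjq j - snd x j q))"
    by (simp add: f_truncate)
qed

lemma continuous_on_rs_tilde_profiles:
  assumes valid: "valid_sys S" and q: "q < nQ S"
  shows "continuous_on (profiles S C) (\<lambda>x. rs_tilde S q (fst x q) (\<lambda>j. snd x j q))"
proof -
  have pos: "0 < sig2 S + (\<Sum>j<nJ S. HJD S j q * snd x j q)"
    "0 < sig2 S + (\<Sum>j<nJ S. HJE S j * snd x j q)"
    "0 < 1 + HSD S q * fst x q / (sig2 S + (\<Sum>j<nJ S. HJD S j q * snd x j q))"
    "0 < 1 + HSE S q * fst x q / (sig2 S + (\<Sum>j<nJ S. HJE S j * snd x j q))"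
    if "x \<in> profiles S C" for x
  proof -
    note nonneg = Pq_nonneg[OF profile_own_Pq[OF that q]]
    show "0 < sig2 S + (\<Sum>j<nJ S. HJD S j q * snd x j q)"
      "0 < sig2 S + (\<Sum>j<nJ S. HJE S j * snd x j q)"
      using legitimate_interference_pos[OF valid q nonneg]
        eavesdropper_interference_pos[OF valid q nonneg] by simp_all
    then show "0 < 1 + HSD S q * fst x q / (sig2 S + (\<Sum>j<nJ S. HJD S j q * snd x j q))"
      "0 < 1 + HSE S q * fst x q / (sig2 S + (\<Sum>j<nJ S. HJE S j * snd x j q))"
      using signal_powers_nonneg[OF valid q nonneg] by (simp_all add: add_pos_nonneg)
  qed
  show ?thesis
    unfolding rs_tilde_def r_qq_def r_qe_def
    by (intro continuous_intros; use pos in fastforce)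
qed

lemma continuous_on_potential_rs_tilde:
  "valid_sys S \<Longrightarrow> continuous_on (profiles S C) (potential (rs_tilde S) S)"
  unfolding potential_def by (intro continuous_intros continuous_on_rs_tilde_profiles) auto

lemma continuous_on_potential_rs:
  "valid_sys S \<Longrightarrow> continuous_on (profiles S C) (potential (rs S) S)"
  unfolding potential_def rs_def by (intro continuous_intros continuous_on_rs_tilde_profiles) auto

lemma BQGNE_exists:
  assumes valid: "valid_sys S"
  shows "\<exists>p pJ. BQGNE S p pJ"
proof -
  let ?K = "profiles S (\<lambda>_ _. True)"
  have "(\<lambda>_. 0, \<lambda>_ _. 0) \<in> ?K"
    using valid by (auto simp: profiles_iff valid_sys_def less_imp_le)
  then obtain x where x: "x \<in> ?K" and max: "\<forall>y\<in>?K. potential (rs S) S y \<le> potential (rs S) S x"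
    using continuous_attains_sup[OF compact_profiles _ continuous_on_potential_rs[OF valid]]
    by (metis closed_UNIV empty_iff UNIV_def)
  have "BQGNE S (fst x) (snd x)"
    unfolding BQGNE_def
  proof (intro allI impI conjI)
    fix q pq pjq assume q: "q < nQ S"
    show own: "Pq S (snd x) q (fst x q) (\<lambda>j. snd x j q)" using x q by (rule profile_own_Pq)
    assume "Pq S (snd x) q pq pjq"
    then show "dir_deriv (rs S q) (fst x q) (\<lambda>j. snd x j q)
        (pq - fst x q) (\<lambda>j. pjq j - snd x j q) \<le> 0"
      by (rule potential_maximizer_right_derivative_nonpos[OF x max q _ _ _
            rs_truncate_jammers rs_difference_quotient_tendsto[OF valid q Pq_nonneg[OF own]]])
        simp_all
  qed
  then show ?thesis by blast
qed

lemma closed_Cq: "closed (Collect (Cq S q))"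
  unfolding Cq_def by (intro closed_Collect_le continuous_intros) simp

lemma Pset_truncation_in_profiles:
  assumes "Pset S p pJ"
  shows "((\<lambda>q. if q < nQ S then p q else 0), (\<lambda>j q. if j < nJ S \<and> q < nQ S then pJ j q else 0))
    \<in> profiles S (Cq S)"
proof -
  have nonneg: "0 \<le> pJ j r" if "j < nJ S" "r < nQ S" for j r
    using assms that by (simp add: Pset_def)
  have budget: "(\<Sum>r<nQ S. pJ j r) \<le> PJw S j" if "j < nJ S" for j
    using assms that by (simp add: Pset_def)
  have "pJ j q \<le> PJw S j" if "j < nJ S" "q < nQ S" for j q
    using member_le_sum[of q "{..<nQ S}" "pJ j"] nonneg budget[of j] that by fastforce
  moreover have "Cq S q (\<lambda>j. if j < nJ S \<and> q < nQ S then pJ j q else 0)" if "q < nQ S" for q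
  proof -
    have "(\<lambda>j. if j < nJ S \<and> q < nQ S then pJ j q else 0) = truncate_jammers S (\<lambda>j. pJ j q)"
      using that by (simp add: truncate_jammers_def fun_eq_iff)
    then show ?thesis
      using assms that by (simp add: Cq_truncate_jammers Pset_def)
  qed
  ultimately show ?thesis
    using assms nonneg budget by (auto simp: profiles_iff Pset_def)
qed

lemma QGNE_sm_exists:
  assumes valid: "valid_sys S" and "Pset S p0 pJ0"
  shows "\<exists>p pJ. QGNE_sm S p pJ"
proof -
  let ?K = "profiles S (Cq S)"
  obtain x where x: "x \<in> ?K"
    and max: "\<forall>y\<in>?K. potential (rs_tilde S) S y \<le> potential (rs_tilde S) S x"
    using continuous_attains_sup[OF compact_profiles[of "Cq S", OF closed_Cq] _
        continuous_on_potential_rs_tilde[OF valid]]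
      Pset_truncation_in_profiles[OF assms(2)] by blast
  have "QGNE_sm S (fst x) (snd x)"
    unfolding QGNE_sm_def
  proof (intro allI impI conjI)
    fix q pq pjq assume q: "q < nQ S"
    have own: "Pq S (snd x) q (fst x q) (\<lambda>j. snd x j q)" using x q by (rule profile_own_Pq)
    moreover have own_C: "Cq S q (\<lambda>j. snd x j q)" using x q by (rule profile_constraint)
    ultimately show "Pq_sm S (snd x) q (fst x q) (\<lambda>j. snd x j q)" by (simp add: Pq_sm_def)
    assume "Pq_sm S (snd x) q pq pjq"
    then have dev: "Pq S (snd x) q pq pjq" and dev_C: "Cq S q pjq" by (simp_all add: Pq_sm_def)
    show "grad_dot (nJ S) (rs_tilde S q) (fst x q) (\<lambda>j. snd x j q)
        (pq - fst x q) (\<lambda>j. pjq j - snd x j q) \<le> 0"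
      by (rule potential_maximizer_right_derivative_nonpos[OF x max q dev _
            Cq_truncate_jammers rs_tilde_truncate_jammers
            rs_tilde_difference_quotient_tendsto[OF valid q Pq_nonneg[OF own]]])
        (rule Cq_segment[OF own_C dev_C])
  qed
  then show ?thesis by blast
qed

theorem proposition2:
  fixes S :: sys
  assumes "valid_sys S"
  shows "(\<exists>p pJ. BQGNE S p pJ)
    \<and> ((\<exists>p pJ. Pset S p pJ) \<longrightarrow>
         (\<exists>p pJ. QGNE_sm S p pJ) \<and> (\<exists>p pJ. restricted_BQGNE S p pJ))
    \<and> (\<forall>p pJ. (BQGNE S p pJ \<or> restricted_BQGNE S p pJ)
              \<and> (\<forall>q<nQ S. Cq S q (\<lambda>j. pJ j q)) \<longrightarrow> QGNE_sm S p pJ)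
    \<and> (\<forall>p pJ. QGNE_sm S p pJ \<longrightarrow> restricted_BQGNE S p pJ)"
  using BQGNE_exists[OF assms] QGNE_sm_exists[OF assms]
    QGNE_sm_imp_restricted_BQGNE[OF assms] restricted_BQGNE_imp_QGNE_sm[OF assms]
    BQGNE_imp_restricted_BQGNE
  by meson

end
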